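(* Let $a,b>0$, $D=[0,a]\times[0,b]$, and let $f:D\to\mathbb{R}$ be a $C^3$ function. Let $p\in\operatorname{int}D$ be a saddle point of $f$, i.e. a stationary point at which the determinant of the Hessian of $f$ is negative. Then there exist a neighborhood $U$ of $p$ and a number $r>0$ such that for every sufficiently large $n$, every grid vertex $p_{i,j}$ of $D_n$ lying in $U$ is neither minimal nor maximal within its grid circle $C_r(p_{i,j})$.
   Context: For $n\ge1$, $D_n$ denotes the division of $D$ into $n\times n$ congruent rectangles; its grid vertices are the points $p_{i,j}=\left(\frac{i}{n}a,\frac{j}{n}b\right)$, $0\le i,j\le n$. The grid circle of centre $p_{i,j}$ and radius $r$ is $C_r(p_{i,j})=\{p_{l,m}: 0\le l,m\le n,\ \max\{|l-i|,|m-j|\}\le r\}$. A grid vertex $p_{i,j}$ is minimal (resp. maximal) within $C_r(p_{i,j})$ if $f(p_{i,j})\le f(q)$ (resp. $f(p_{i,j})\ge f(q)$) for every $q\in C_r(p_{i,j})$. *)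

theory Defs
  imports "HOL-Analysis.Analysis"
begin

fun Ck :: "nat \<Rightarrow> (real \<times> real \<Rightarrow> real) \<Rightarrow> (real \<times> real) set \<Rightarrow> bool" where
  "Ck 0 g S = continuous_on S g"
| "Ck (Suc k) g S =
     ((\<forall>x\<in>S. g differentiable (at x)) \<and>
      (\<forall>v. Ck k (\<lambda>x. frechet_derivative g (at x) v) S))"

definition second_deriv :: "(real \<times> real \<Rightarrow> real) \<Rightarrow> real \<times> real \<Rightarrow> real \<times> real \<Rightarrow> real \<times> real \<Rightarrow> real" where
  "second_deriv g x v w = frechet_derivative (\<lambda>y. frechet_derivative g (at y) v) (at x) w"

definition hessian_det :: "(real \<times> real \<Rightarrow> real) \<Rightarrow> real \<times> real \<Rightarrow> real" where
  "hessian_det g x =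
     second_deriv g x (1,0) (1,0) * second_deriv g x (0,1) (0,1)
     - second_deriv g x (1,0) (0,1) * second_deriv g x (0,1) (1,0)"

definition grid_vertex :: "real \<Rightarrow> real \<Rightarrow> nat \<Rightarrow> nat \<Rightarrow> nat \<Rightarrow> real \<times> real" where
  "grid_vertex a b n i j = (real i / real n * a, real j / real n * b)"

definition grid_circle :: "nat \<Rightarrow> nat \<Rightarrow> nat \<Rightarrow> real \<Rightarrow> (nat \<times> nat) set" where
  "grid_circle n i j r =
     {(l, m). l \<le> n \<and> m \<le> n \<and>
        max \<bar>real l - real i\<bar> \<bar>real m - real j\<bar> \<le> r}"

definition grid_minimal :: "(real \<times> real \<Rightarrow> real) \<Rightarrow> real \<Rightarrow> real \<Rightarrow> nat \<Rightarrow> nat \<Rightarrow> nat \<Rightarrow> real \<Rightarrow> bool" where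
  "grid_minimal f a b n i j r =
     (\<forall>(l, m)\<in>grid_circle n i j r. f (grid_vertex a b n i j) \<le> f (grid_vertex a b n l m))"

definition grid_maximal :: "(real \<times> real \<Rightarrow> real) \<Rightarrow> real \<Rightarrow> real \<Rightarrow> nat \<Rightarrow> nat \<Rightarrow> nat \<Rightarrow> real \<Rightarrow> bool" where
  "grid_maximal f a b n i j r =
     (\<forall>(l, m)\<in>grid_circle n i j r. f (grid_vertex a b n i j) \<ge> f (grid_vertex a b n l m))"

end

theory Submission
  imports Defs
begin

text \<open>At a saddle point the Hessian is an indefinite quadratic form, so it is negative at some
  vector and positive at another; by homogeneity and density of the rationals both vectors can be
  taken of the form v = (k a, l b) and w = (k' a, l' b) with integers k, l, k', l', i.e. integer
  multiples of the grid steps. By continuity of the second derivatives, f is strictly concave along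
  v and strictly convex along w on a whole ball around p. For n large, the points q \<plusminus> v/n of a
  grid vertex q near p are again grid vertices in its grid circle of radius r > max |k|, |l|, |k'|, |l'|,
  and f (q + v/n) + f (q - v/n) < 2 f q, so q is not minimal; likewise w shows that q is not maximal.\<close>

lemma strict_midpoint_concave:
  fixes \<phi> \<phi>' \<phi>'' :: "real \<Rightarrow> real"
  assumes "t > 0"
    and d1: "\<And>s. \<bar>s\<bar> \<le> t \<Longrightarrow> (\<phi> has_real_derivative \<phi>' s) (at s)"
    and d2: "\<And>s. \<bar>s\<bar> \<le> t \<Longrightarrow> (\<phi>' has_real_derivative \<phi>'' s) (at s)"
    and neg: "\<And>s. \<bar>s\<bar> \<le> t \<Longrightarrow> \<phi>'' s < 0"
  shows "\<phi> t + \<phi> (-t) < 2 * \<phi> 0"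
proof -
  obtain z1 where z1: "0 < z1" "z1 < t" "\<phi> t - \<phi> 0 = t * \<phi>' z1"
    using MVT2[of 0 t \<phi> \<phi>'] \<open>t > 0\<close> d1 by auto
  obtain z2 where z2: "-t < z2" "z2 < 0" "\<phi> 0 - \<phi> (-t) = t * \<phi>' z2"
    using MVT2[of "-t" 0 \<phi> \<phi>'] \<open>t > 0\<close> d1 by auto
  have "\<phi>' z1 < \<phi>' z2"
  proof (rule DERIV_neg_imp_decreasing[of z2 z1])
    show "z2 < z1" using z1 z2 by simp
  next
    fix x assume "z2 \<le> x" "x \<le> z1"
    then have "\<bar>x\<bar> \<le> t" using z1 z2 by auto
    then show "\<exists>y. (\<phi>' has_real_derivative y) (at x) \<and> y < 0"
      using d2 neg by blast
  qed
  then show ?thesis using \<open>t > 0\<close> z1(3) z2(3) by (simp add: algebra_simps)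
qed

lemma strict_midpoint_convex:
  fixes \<phi> \<phi>' \<phi>'' :: "real \<Rightarrow> real"
  assumes "t > 0"
    and "\<And>s. \<bar>s\<bar> \<le> t \<Longrightarrow> (\<phi> has_real_derivative \<phi>' s) (at s)"
    and "\<And>s. \<bar>s\<bar> \<le> t \<Longrightarrow> (\<phi>' has_real_derivative \<phi>'' s) (at s)"
    and "\<And>s. \<bar>s\<bar> \<le> t \<Longrightarrow> \<phi>'' s > 0"
  shows "\<phi> t + \<phi> (-t) > 2 * \<phi> 0"
proof -
  have "- \<phi> t + - \<phi> (-t) < 2 * - \<phi> 0"
    by (rule strict_midpoint_concave[of t "\<lambda>s. - \<phi> s" "\<lambda>s. - \<phi>' s" "\<lambda>s. - \<phi>'' s"])
      (use assms in \<open>auto intro: DERIV_minus\<close>)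
  then show ?thesis by simp
qed

lemma linear_on_pair:
  fixes L :: "real \<times> real \<Rightarrow> real"
  assumes "linear L"
  shows "L (u1, u2) = u1 * L (1, 0) + u2 * L (0, 1)"
proof -
  have "L (u1, u2) = L (u1 *\<^sub>R (1, 0) + u2 *\<^sub>R (0, 1))" by simp
  also have "\<dots> = u1 * L (1, 0) + u2 * L (0, 1)"
    by (simp only: linear_add[OF assms] linear_scale[OF assms] real_scaleR_def)
  finally show ?thesis .
qed

lemma has_real_derivative_along_line:
  fixes g :: "'a :: real_normed_vector \<Rightarrow> real"
  assumes "g differentiable (at (q + s *\<^sub>R v))"
  shows "((\<lambda>t. g (q + t *\<^sub>R v)) has_real_derivative frechet_derivative g (at (q + s *\<^sub>R v)) v) (at s)"
proof -
  let ?D = "frechet_derivative g (at (q + s *\<^sub>R v))"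
  have "((\<lambda>t. q + t *\<^sub>R v) has_derivative (\<lambda>t. t *\<^sub>R v)) (at s)"
    by (auto intro!: derivative_eq_intros)
  from has_derivative_compose[OF this] have
    "((\<lambda>t. g (q + t *\<^sub>R v)) has_derivative (\<lambda>t. ?D (t *\<^sub>R v))) (at s)"
    using assms frechet_derivative_works by blast
  moreover have "(\<lambda>t. ?D (t *\<^sub>R v)) = (*) (?D v)"
    using linear_frechet_derivative[OF assms] by (auto simp: linear_scale fun_eq_iff)
  ultimately show ?thesis by (simp add: has_field_derivative_def)
qed

lemma second_derivative_along_line:
  fixes g :: "real \<times> real \<Rightarrow> real"
  assumes "(\<lambda>y. frechet_derivative g (at y) v) differentiable (at (q + s *\<^sub>R v))"
  shows "((\<lambda>t. frechet_derivative g (at (q + t *\<^sub>R v)) v) has_real_derivative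
           second_deriv g (q + s *\<^sub>R v) v v) (at s)"
  unfolding second_deriv_def using has_real_derivative_along_line[OF assms] by simp

lemma add_scaleR_in_ball:
  fixes q v :: "'a :: real_normed_vector"
  assumes "q \<in> ball c (e / 2)" "\<bar>s\<bar> * norm v \<le> e / 2"
  shows "q + s *\<^sub>R v \<in> ball c e"
proof -
  have "dist c (q + s *\<^sub>R v) \<le> dist c q + \<bar>s\<bar> * norm v"
    using dist_triangle[of c "q + s *\<^sub>R v" q] by (simp add: dist_norm)
  then show ?thesis using assms by simp
qed

lemma derivatives_along_segment_in_ball:
  fixes f :: "real \<times> real \<Rightarrow> real"
  assumes "\<And>x. x \<in> ball c e \<Longrightarrow> f differentiable (at x)"
    and "\<And>x. x \<in> ball c e \<Longrightarrow> (\<lambda>y. frechet_derivative f (at y) v) differentiable (at x)"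
    and "q \<in> ball c (e / 2)" "t * norm v \<le> e / 2" "\<bar>s\<bar> \<le> t"
  shows "q + s *\<^sub>R v \<in> ball c e"
    and "((\<lambda>s. f (q + s *\<^sub>R v)) has_real_derivative frechet_derivative f (at (q + s *\<^sub>R v)) v) (at s)"
    and "((\<lambda>s. frechet_derivative f (at (q + s *\<^sub>R v)) v) has_real_derivative
           second_deriv f (q + s *\<^sub>R v) v v) (at s)"
proof -
  have "\<bar>s\<bar> * norm v \<le> e / 2"
    using mult_right_mono[OF assms(5) norm_ge_zero[of v]] assms(4) by linarith
  then show in_ball: "q + s *\<^sub>R v \<in> ball c e"
    by (rule add_scaleR_in_ball[OF assms(3)])
  show "((\<lambda>s. f (q + s *\<^sub>R v)) has_real_derivative frechet_derivative f (at (q + s *\<^sub>R v)) v) (at s)"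
    by (rule has_real_derivative_along_line[OF assms(1)[OF in_ball]])
  show "((\<lambda>s. frechet_derivative f (at (q + s *\<^sub>R v)) v) has_real_derivative
           second_deriv f (q + s *\<^sub>R v) v v) (at s)"
    by (rule second_derivative_along_line[OF assms(2)[OF in_ball]])
qed

lemma strict_midpoint_concave_on_ball:
  fixes f :: "real \<times> real \<Rightarrow> real"
  assumes "\<And>x. x \<in> ball c e \<Longrightarrow> f differentiable (at x)"
    and "\<And>x. x \<in> ball c e \<Longrightarrow> (\<lambda>y. frechet_derivative f (at y) v) differentiable (at x)"
    and "\<And>x. x \<in> ball c e \<Longrightarrow> second_deriv f x v v < 0"
    and "q \<in> ball c (e / 2)" "t > 0" "t * norm v \<le> e / 2"
  shows "f (q + t *\<^sub>R v) + f (q - t *\<^sub>R v) < 2 * f q"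
proof -
  note along = derivatives_along_segment_in_ball[OF assms(1,2,4,6)]
  have "f (q + t *\<^sub>R v) + f (q + (-t) *\<^sub>R v) < 2 * f (q + 0 *\<^sub>R v)"
    by (rule strict_midpoint_concave[of t "\<lambda>s. f (q + s *\<^sub>R v)"
          "\<lambda>s. frechet_derivative f (at (q + s *\<^sub>R v)) v" "\<lambda>s. second_deriv f (q + s *\<^sub>R v) v v",
          OF \<open>t > 0\<close> along(2) along(3) assms(3)[OF along(1)]])
  then show ?thesis by simp
qed

lemma strict_midpoint_convex_on_ball:
  fixes f :: "real \<times> real \<Rightarrow> real"
  assumes "\<And>x. x \<in> ball c e \<Longrightarrow> f differentiable (at x)"
    and "\<And>x. x \<in> ball c e \<Longrightarrow> (\<lambda>y. frechet_derivative f (at y) v) differentiable (at x)"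
    and "\<And>x. x \<in> ball c e \<Longrightarrow> second_deriv f x v v > 0"
    and "q \<in> ball c (e / 2)" "t > 0" "t * norm v \<le> e / 2"
  shows "f (q + t *\<^sub>R v) + f (q - t *\<^sub>R v) > 2 * f q"
proof -
  note along = derivatives_along_segment_in_ball[OF assms(1,2,4,6)]
  have "f (q + t *\<^sub>R v) + f (q + (-t) *\<^sub>R v) > 2 * f (q + 0 *\<^sub>R v)"
    by (rule strict_midpoint_convex[of t "\<lambda>s. f (q + s *\<^sub>R v)"
          "\<lambda>s. frechet_derivative f (at (q + s *\<^sub>R v)) v" "\<lambda>s. second_deriv f (q + s *\<^sub>R v) v v",
          OF \<open>t > 0\<close> along(2) along(3) assms(3)[OF along(1)]])
  then show ?thesis by simp
qed

lemma second_deriv_linear_left: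
  fixes f :: "real \<times> real \<Rightarrow> real"
  assumes "open S" "p \<in> S" "\<And>x. x \<in> S \<Longrightarrow> f differentiable (at x)"
    and "(\<lambda>y. frechet_derivative f (at y) (1, 0)) differentiable (at p)"
    and "(\<lambda>y. frechet_derivative f (at y) (0, 1)) differentiable (at p)"
  shows "second_deriv f p (u1, u2) w = u1 * second_deriv f p (1, 0) w + u2 * second_deriv f p (0, 1) w"
proof -
  define h where "h = (\<lambda>v y. frechet_derivative f (at y) v)"
  define D1 where "D1 = frechet_derivative (h (1, 0)) (at p)"
  define D2 where "D2 = frechet_derivative (h (0, 1)) (at p)"
  have "((\<lambda>y. u1 * h (1, 0) y + u2 * h (0, 1) y) has_derivative (\<lambda>w. u1 * D1 w + u2 * D2 w)) (at p)"
    unfolding D1_def D2_def h_def using assms(4,5)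
    by (intro has_derivative_add has_derivative_mult_right) (simp_all add: frechet_derivative_works)
  moreover have "u1 * h (1, 0) y + u2 * h (0, 1) y = h (u1, u2) y" if "y \<in> S" for y
    unfolding h_def using linear_on_pair[OF linear_frechet_derivative] assms(3) that by metis
  ultimately have "(h (u1, u2) has_derivative (\<lambda>w. u1 * D1 w + u2 * D2 w)) (at p)"
    using has_derivative_transform_within_open[OF _ assms(1,2)] by blast
  then show ?thesis
    unfolding second_deriv_def D1_def D2_def h_def by (simp add: frechet_derivative_at[symmetric])
qed

lemma second_deriv_quadratic_form:
  fixes f :: "real \<times> real \<Rightarrow> real"
  assumes "open S" "p \<in> S" "\<And>x. x \<in> S \<Longrightarrow> f differentiable (at x)"
    and "\<And>v. (\<lambda>y. frechet_derivative f (at y) v) differentiable (at p)"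
  shows "second_deriv f p (u1, u2) (u1, u2) =
           second_deriv f p (1, 0) (1, 0) * u1\<^sup>2
         + (second_deriv f p (1, 0) (0, 1) + second_deriv f p (0, 1) (1, 0)) * u1 * u2
         + second_deriv f p (0, 1) (0, 1) * u2\<^sup>2"
proof -
  have right: "second_deriv f p v (u1, u2) = u1 * second_deriv f p v (1, 0) + u2 * second_deriv f p v (0, 1)"
    for v
    unfolding second_deriv_def using linear_on_pair[OF linear_frechet_derivative[OF assms(4)]] .
  have "second_deriv f p (u1, u2) (u1, u2) =
          u1 * second_deriv f p (1, 0) (u1, u2) + u2 * second_deriv f p (0, 1) (u1, u2)"
    by (rule second_deriv_linear_left[OF assms(1-3) assms(4) assms(4)])
  also have "\<dots> = u1 * (u1 * second_deriv f p (1, 0) (1, 0) + u2 * second_deriv f p (1, 0) (0, 1))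
                 + u2 * (u1 * second_deriv f p (0, 1) (1, 0) + u2 * second_deriv f p (0, 1) (0, 1))"
    by (simp only: right)
  finally show ?thesis by (simp add: power2_eq_square algebra_simps)
qed

lemma indefinite_binary_form_neg:
  fixes \<alpha> \<beta> \<gamma> :: real
  assumes "\<beta>\<^sup>2 > 4 * \<alpha> * \<gamma>"
  obtains x y where "\<alpha> * x\<^sup>2 + \<beta> * x * y + \<gamma> * y\<^sup>2 < 0"
proof (cases "\<alpha> > 0")
  case True
  have "\<alpha> * (-\<beta>)\<^sup>2 + \<beta> * (-\<beta>) * (2 * \<alpha>) + \<gamma> * (2 * \<alpha>)\<^sup>2 = \<alpha> * (4 * \<alpha> * \<gamma> - \<beta>\<^sup>2)"
    by (simp add: power2_eq_square algebra_simps)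
  also have "\<dots> < 0" using True assms by (simp add: mult_pos_neg)
  finally show ?thesis using that by blast
next
  case False
  show ?thesis
  proof (cases "\<alpha> = 0")
    case True
    then have "\<beta> \<noteq> 0" using assms by auto
    then have "\<alpha> * ((-1 - \<gamma>) / \<beta>)\<^sup>2 + \<beta> * ((-1 - \<gamma>) / \<beta>) * 1 + \<gamma> * 1\<^sup>2 < 0"
      using True by (simp add: field_simps)
    then show ?thesis using that by blast
  next
    case False
    then show ?thesis using \<open>\<not> \<alpha> > 0\<close> that[of 1 0] by simp
  qed
qed

lemma binary_form_neg_at_integer_point:
  fixes \<alpha> \<beta> \<gamma> :: real
  assumes "\<alpha> * x0\<^sup>2 + \<beta> * x0 * y0 + \<gamma> * y0\<^sup>2 < 0"
  obtains k l :: int where "\<alpha> * (of_int k)\<^sup>2 + \<beta> * of_int k * of_int l + \<gamma> * (of_int l)\<^sup>2 < 0"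
proof -
  define Q where "Q = (\<lambda>z :: real \<times> real. \<alpha> * (fst z)\<^sup>2 + \<beta> * fst z * snd z + \<gamma> * (snd z)\<^sup>2)"
  have "open {z. Q z < 0}"
    unfolding Q_def by (intro open_Collect_less continuous_intros)
  moreover have "(x0, y0) \<in> {z. Q z < 0}" using assms by (simp add: Q_def)
  ultimately obtain e where "e > 0" and e: "ball (x0, y0) e \<subseteq> {z. Q z < 0}"
    using open_contains_ball by blast
  obtain r1 where r1: "r1 \<in> \<rat>" "x0 < r1" "r1 < x0 + e / 2"
    using Rats_dense_in_real[of x0 "x0 + e / 2"] \<open>e > 0\<close> by auto
  obtain r2 where r2: "r2 \<in> \<rat>" "y0 < r2" "r2 < y0 + e / 2"
    using Rats_dense_in_real[of y0 "y0 + e / 2"] \<open>e > 0\<close> by auto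
  have "dist (x0, y0) (r1, r2) \<le> \<bar>x0 - r1\<bar> + \<bar>y0 - r2\<bar>"
    unfolding dist_norm using norm_Pair_le[of "x0 - r1" "y0 - r2"] by simp
  also have "\<dots> < e" using r1 r2 by simp
  finally have "Q (r1, r2) < 0" using e by auto
  obtain p1 q1 where pq1: "q1 > 0" "r1 = of_int p1 / of_int q1" using r1(1) Rats_cases' by metis
  obtain p2 q2 where pq2: "q2 > 0" "r2 = of_int p2 / of_int q2" using r2(1) Rats_cases' by metis
  \<comment> \<open>Q is homogeneous of degree 2, so clearing denominators keeps its sign.\<close>
  define c where "c = real_of_int (q1 * q2)"
  have "c > 0" using pq1 pq2 by (simp add: c_def)
  have "Q (c * r1, c * r2) = c\<^sup>2 * Q (r1, r2)" by (simp add: Q_def power2_eq_square algebra_simps)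
  also have "\<dots> < 0" using \<open>c > 0\<close> \<open>Q (r1, r2) < 0\<close> by (simp add: mult_pos_neg)
  finally have "Q (c * r1, c * r2) < 0" .
  moreover have "c * r1 = of_int (p1 * q2)" "c * r2 = of_int (p2 * q1)"
    using pq1 pq2 by (simp_all add: c_def field_simps)
  ultimately show ?thesis using that[of "p1 * q2" "p2 * q1"] by (simp add: Q_def)
qed

lemma saddle_grid_directions:
  fixes f :: "real \<times> real \<Rightarrow> real"
  assumes "a > 0" "b > 0" "open S" "p \<in> S" "\<And>x. x \<in> S \<Longrightarrow> f differentiable (at x)"
    and "\<And>v. (\<lambda>y. frechet_derivative f (at y) v) differentiable (at p)"
    and "hessian_det f p < 0"
  obtains k l k' l' :: int
  where "second_deriv f p (of_int k * a, of_int l * b) (of_int k * a, of_int l * b) < 0"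
    and "second_deriv f p (of_int k' * a, of_int l' * b) (of_int k' * a, of_int l' * b) > 0"
proof -
  define A where "A = second_deriv f p (1, 0) (1, 0)"
  define B where "B = second_deriv f p (1, 0) (0, 1) + second_deriv f p (0, 1) (1, 0)"
  define C where "C = second_deriv f p (0, 1) (0, 1)"
  define \<alpha> \<beta> \<gamma> where "\<alpha> = A * a\<^sup>2" and "\<beta> = B * a * b" and "\<gamma> = C * b\<^sup>2"
  have Q: "second_deriv f p (x * a, y * b) (x * a, y * b) = \<alpha> * x\<^sup>2 + \<beta> * x * y + \<gamma> * y\<^sup>2" for x y
  proof -
    have "second_deriv f p (x * a, y * b) (x * a, y * b) =
            A * (x * a)\<^sup>2 + B * (x * a) * (y * b) + C * (y * b)\<^sup>2"
      unfolding A_def B_def C_def by (rule second_deriv_quadratic_form[OF assms(3-6)])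
    then show ?thesis by (simp add: \<alpha>_def \<beta>_def \<gamma>_def power2_eq_square algebra_simps)
  qed
  \<comment> \<open>The mixed partials need not agree: their squared difference only helps.\<close>
  have "B\<^sup>2 - 4 * A * C =
        (second_deriv f p (1, 0) (0, 1) - second_deriv f p (0, 1) (1, 0))\<^sup>2 - 4 * hessian_det f p"
    unfolding A_def B_def C_def hessian_det_def by (simp add: power2_eq_square algebra_simps)
  then have "B\<^sup>2 - 4 * A * C > 0"
    using assms(7) by (smt (verit) zero_le_power2)
  moreover have "\<beta>\<^sup>2 - 4 * \<alpha> * \<gamma> = (a * b)\<^sup>2 * (B\<^sup>2 - 4 * A * C)"
    by (simp add: \<alpha>_def \<beta>_def \<gamma>_def power2_eq_square algebra_simps)
  moreover have "(a * b)\<^sup>2 > 0" using assms(1,2) by simp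
  ultimately have "\<beta>\<^sup>2 - 4 * \<alpha> * \<gamma> > 0" by (metis mult_pos_pos)
  then have disc: "\<beta>\<^sup>2 > 4 * \<alpha> * \<gamma>" "(- \<beta>)\<^sup>2 > 4 * (- \<alpha>) * (- \<gamma>)" by simp_all
  obtain k l :: int where "\<alpha> * (of_int k)\<^sup>2 + \<beta> * of_int k * of_int l + \<gamma> * (of_int l)\<^sup>2 < 0"
    using indefinite_binary_form_neg[OF disc(1)] binary_form_neg_at_integer_point by metis
  moreover obtain k' l' :: int
    where "(- \<alpha>) * (of_int k')\<^sup>2 + (- \<beta>) * of_int k' * of_int l' + (- \<gamma>) * (of_int l')\<^sup>2 < 0"
    using indefinite_binary_form_neg[OF disc(2)] binary_form_neg_at_integer_point by metis
  ultimately show ?thesis using that[of k l k' l'] by (simp add: Q)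
qed

lemma scaled_index_in_interval:
  assumes "a > 0" "n > 0"
  shows "x / real n * a \<in> {0..a} \<longleftrightarrow> 0 \<le> x \<and> x \<le> real n"
  using assms by (auto simp: field_simps zero_le_mult_iff zero_le_divide_iff)

lemma grid_vertex_translate:
  fixes k l :: int
  assumes "a > 0" "b > 0" "n > 0"
    and "grid_vertex a b n i j + (1 / real n) *\<^sub>R (of_int k * a, of_int l * b) \<in> {0..a} \<times> {0..b}"
    and "\<bar>of_int k\<bar> \<le> r" "\<bar>of_int l\<bar> \<le> r"
  obtains i' j' where "(i', j') \<in> grid_circle n i j r"
    and "grid_vertex a b n i' j' = grid_vertex a b n i j + (1 / real n) *\<^sub>R (of_int k * a, of_int l * b)"
proof -
  define I J where "I = int i + k" and "J = int j + l"
  have shift: "grid_vertex a b n i j + (1 / real n) *\<^sub>R (of_int k * a, of_int l * b)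
             = (of_int I / real n * a, of_int J / real n * b)"
    by (simp add: grid_vertex_def I_def J_def add_divide_distrib algebra_simps)
  then have "0 \<le> I" "I \<le> int n" "0 \<le> J" "J \<le> int n"
    using assms(4) scaled_index_in_interval[OF assms(1,3), of "of_int I"]
      scaled_index_in_interval[OF assms(2,3), of "of_int J"] by auto
  then have "(nat I, nat J) \<in> grid_circle n i j r"
    and "grid_vertex a b n (nat I) (nat J) = (of_int I / real n * a, of_int J / real n * b)"
    using assms(5,6) by (auto simp: grid_circle_def grid_vertex_def I_def J_def)
  then show ?thesis using that shift by metis
qed

lemma not_grid_minimal_if_midpoint_concave:
  fixes k l :: int
  assumes "a > 0" "b > 0" "n > 0"
    and "q = grid_vertex a b n i j" "d = (1 / real n) *\<^sub>R (of_int k * a, of_int l * b)"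
    and "q + d \<in> {0..a} \<times> {0..b}" "q - d \<in> {0..a} \<times> {0..b}"
    and "\<bar>of_int k\<bar> \<le> r" "\<bar>of_int l\<bar> \<le> r"
    and "g (q + d) + g (q - d) < 2 * g q"
  shows "\<not> grid_minimal g a b n i j r"
proof
  assume min: "grid_minimal g a b n i j r"
  have below: "g q \<le> g (q + (1 / real n) *\<^sub>R (of_int u * a, of_int w * b))"
    if hyp: "q + (1 / real n) *\<^sub>R (of_int u * a, of_int w * b) \<in> {0..a} \<times> {0..b}"
      and bounds: "\<bar>of_int u\<bar> \<le> r" "\<bar>of_int w\<bar> \<le> r" for u w :: int
  proof -
    obtain i' j' where "(i', j') \<in> grid_circle n i j r"
      and "grid_vertex a b n i' j' = q + (1 / real n) *\<^sub>R (of_int u * a, of_int w * b)"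
      using grid_vertex_translate[OF assms(1-3) hyp[unfolded assms(4)] bounds] unfolding assms(4) by blast
    then show ?thesis using min assms(4) unfolding grid_minimal_def by fastforce
  qed
  have minus: "q + (1 / real n) *\<^sub>R (of_int (- k) * a, of_int (- l) * b) = q - d"
    using assms(5) by simp
  have "g q \<le> g (q + d)"
    using below[of k l] assms(5,6,8,9) by simp
  moreover have "g q \<le> g (q - d)"
    using below[of "- k" "- l", unfolded minus] assms(7-9) by simp
  ultimately show False using assms(10) by simp
qed

lemma grid_maximal_iff_grid_minimal_uminus:
  "grid_maximal f a b n i j r \<longleftrightarrow> grid_minimal (\<lambda>x. - f x) a b n i j r"
  unfolding grid_maximal_def grid_minimal_def by simp

lemma eventually_not_grid_minimal:
  fixes k l :: int
  assumes "a > 0" "b > 0" "e > 0" "ball c e \<subseteq> {0..a} \<times> {0..b}"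
    and "\<bar>of_int k\<bar> \<le> r" "\<bar>of_int l\<bar> \<le> r"
    and "v = (of_int k * a, of_int l * b)"
    and concave: "\<And>q t. q \<in> ball c (e / 2) \<Longrightarrow> t > 0 \<Longrightarrow> t * norm v \<le> e / 2 \<Longrightarrow>
                    g (q + t *\<^sub>R v) + g (q - t *\<^sub>R v) < 2 * g q"
  shows "\<exists>N. \<forall>n\<ge>N. \<forall>i j. grid_vertex a b n i j \<in> ball c (e / 2) \<longrightarrow> \<not> grid_minimal g a b n i j r"
proof (intro exI allI impI)
  fix n i j
  assume n: "n \<ge> nat \<lceil>2 * norm v / e\<rceil> + 1" and q: "grid_vertex a b n i j \<in> ball c (e / 2)"
  define t where "t = 1 / real n"
  have "n > 0" "t > 0" using n by (simp_all add: t_def)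
  have "2 * norm v / e \<le> real n" using n by linarith
  then have "t * norm v \<le> e / 2" using \<open>n > 0\<close> \<open>e > 0\<close> by (simp add: t_def field_simps)
  then have "\<bar>t\<bar> * norm v \<le> e / 2" "\<bar>- t\<bar> * norm v \<le> e / 2"
    using \<open>t > 0\<close> by simp_all
  from this[THEN add_scaleR_in_ball[OF q]] assms(4)
  have D: "grid_vertex a b n i j + t *\<^sub>R v \<in> {0..a} \<times> {0..b}"
    "grid_vertex a b n i j - t *\<^sub>R v \<in> {0..a} \<times> {0..b}"
    by auto
  show "\<not> grid_minimal g a b n i j r"
  proof (rule not_grid_minimal_if_midpoint_concave[OF assms(1,2) \<open>n > 0\<close> refl, where d = "t *\<^sub>R v"])
    show "t *\<^sub>R v = (1 / real n) *\<^sub>R (of_int k * a, of_int l * b)"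
      by (simp add: t_def assms(7))
  qed (use D assms(5,6) concave[OF q \<open>t > 0\<close> \<open>t * norm v \<le> e / 2\<close>] in auto)
qed

lemma eventually_not_grid_maximal:
  fixes k l :: int
  assumes "a > 0" "b > 0" "e > 0" "ball c e \<subseteq> {0..a} \<times> {0..b}"
    and "\<bar>of_int k\<bar> \<le> r" "\<bar>of_int l\<bar> \<le> r"
    and "v = (of_int k * a, of_int l * b)"
    and convex: "\<And>q t. q \<in> ball c (e / 2) \<Longrightarrow> t > 0 \<Longrightarrow> t * norm v \<le> e / 2 \<Longrightarrow>
                    g (q + t *\<^sub>R v) + g (q - t *\<^sub>R v) > 2 * g q"
  shows "\<exists>N. \<forall>n\<ge>N. \<forall>i j. grid_vertex a b n i j \<in> ball c (e / 2) \<longrightarrow> \<not> grid_maximal g a b n i j r"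
  unfolding grid_maximal_iff_grid_minimal_uminus
proof (rule eventually_not_grid_minimal[OF assms(1-7)])
  fix q t
  assume "q \<in> ball c (e / 2)" "t > 0" "t * norm v \<le> e / 2"
  from convex[OF this] show "- g (q + t *\<^sub>R v) + - g (q - t *\<^sub>R v) < 2 * - g q" by simp
qed

lemma C3_second_derivatives:
  assumes "Ck 3 f S" "x \<in> S"
  shows "f differentiable (at x)"
    and "(\<lambda>y. frechet_derivative f (at y) v) differentiable (at x)"
    and "isCont (\<lambda>y. second_deriv f y v w) x"
proof -
  have "Ck (Suc (Suc (Suc 0))) f S" using assms(1) by (simp add: numeral_3_eq_3)
  then have "\<forall>x\<in>S. f differentiable (at x)"
    and "\<forall>v. \<forall>x\<in>S. (\<lambda>y. frechet_derivative f (at y) v) differentiable (at x)"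
    and "\<forall>v w. \<forall>x\<in>S. (\<lambda>y. second_deriv f y v w) differentiable (at x)"
    unfolding second_deriv_def by simp_all
  then show "f differentiable (at x)"
    and "(\<lambda>y. frechet_derivative f (at y) v) differentiable (at x)"
    and "isCont (\<lambda>y. second_deriv f y v w) x"
    using assms(2) differentiable_imp_continuous_within by blast+
qed

lemma saddle_grid_directions_near:
  fixes f :: "real \<times> real \<Rightarrow> real"
  assumes "a > 0" "b > 0" "Ck 3 f S" "open S" "p \<in> S" "hessian_det f p < 0"
  obtains e and k l k' l' :: int where "e > 0" "ball p e \<subseteq> S"
    and "\<And>x. x \<in> ball p e \<Longrightarrow>
           second_deriv f x (of_int k * a, of_int l * b) (of_int k * a, of_int l * b) < 0"
    and "\<And>x. x \<in> ball p e \<Longrightarrow>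
           second_deriv f x (of_int k' * a, of_int l' * b) (of_int k' * a, of_int l' * b) > 0"
proof -
  note C3 = C3_second_derivatives[OF assms(3)]
  obtain k l k' l' :: int
    where "second_deriv f p (of_int k * a, of_int l * b) (of_int k * a, of_int l * b) < 0"
      and "second_deriv f p (of_int k' * a, of_int l' * b) (of_int k' * a, of_int l' * b) > 0"
    using saddle_grid_directions[OF assms(1,2,4,5) C3(1) C3(2)[OF assms(5)] assms(6)] .
  moreover have cont: "((\<lambda>x. second_deriv f x u u) \<longlongrightarrow> second_deriv f p u u) (nhds p)" for u
    using C3(3)[OF assms(5), of u u] isCont_def tendsto_at_iff_tendsto_nhds by metis
  ultimately have "\<forall>\<^sub>F x in nhds p. x \<in> S
      \<and> second_deriv f x (of_int k * a, of_int l * b) (of_int k * a, of_int l * b) < 0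
      \<and> second_deriv f x (of_int k' * a, of_int l' * b) (of_int k' * a, of_int l' * b) > 0"
    using eventually_nhds_in_open[OF assms(4,5)] order_tendstoD[OF cont] by (auto intro!: eventually_conj)
  then obtain e where "e > 0" and "\<And>x. x \<in> ball p e \<Longrightarrow> x \<in> S
      \<and> second_deriv f x (of_int k * a, of_int l * b) (of_int k * a, of_int l * b) < 0
      \<and> second_deriv f x (of_int k' * a, of_int l' * b) (of_int k' * a, of_int l' * b) > 0"
    by (auto simp: eventually_nhds_metric dist_commute)
  then show ?thesis using that[of e k l k' l'] by blast
qed

lemma saddle_eventually_not_grid_extremal:
  fixes f :: "real \<times> real \<Rightarrow> real"
  assumes "a > 0" "b > 0" "Ck 3 f S" "open S" "S \<subseteq> {0..a} \<times> {0..b}" "p \<in> S"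
    and "hessian_det f p < 0"
  obtains e r N where "e > 0" "r > 0"
    and "\<forall>n\<ge>N. \<forall>i j. grid_vertex a b n i j \<in> ball p e \<longrightarrow>
           \<not> grid_minimal f a b n i j r \<and> \<not> grid_maximal f a b n i j r"
proof -
  obtain e and k l k' l' :: int where "e > 0" "ball p e \<subseteq> S"
    and concave: "\<And>x. x \<in> ball p e \<Longrightarrow>
           second_deriv f x (of_int k * a, of_int l * b) (of_int k * a, of_int l * b) < 0"
    and convex: "\<And>x. x \<in> ball p e \<Longrightarrow>
           second_deriv f x (of_int k' * a, of_int l' * b) (of_int k' * a, of_int l' * b) > 0"
    by (rule saddle_grid_directions_near[OF assms(1-4,6,7)]) blast
  have D: "f differentiable (at x)" "(\<lambda>y. frechet_derivative f (at y) v) differentiable (at x)"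
    if "x \<in> ball p e" for x v
    using C3_second_derivatives[OF assms(3)] that \<open>ball p e \<subseteq> S\<close> by blast+
  define r where "r = real_of_int (max (max \<bar>k\<bar> \<bar>l\<bar>) (max \<bar>k'\<bar> \<bar>l'\<bar>)) + 1"
  have r: "\<bar>of_int k\<bar> \<le> r" "\<bar>of_int l\<bar> \<le> r" "\<bar>of_int k'\<bar> \<le> r" "\<bar>of_int l'\<bar> \<le> r" "r > 0"
    unfolding r_def by linarith+
  have ball: "ball p e \<subseteq> {0..a} \<times> {0..b}" using \<open>ball p e \<subseteq> S\<close> assms(5) by blast
  have "\<exists>N. \<forall>n\<ge>N. \<forall>i j. grid_vertex a b n i j \<in> ball p (e / 2) \<longrightarrow> \<not> grid_minimal f a b n i j r"
    by (rule eventually_not_grid_minimal[OF assms(1,2) \<open>e > 0\<close> ball r(1,2) refl])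
      (rule strict_midpoint_concave_on_ball[OF D concave])
  moreover have "\<exists>N. \<forall>n\<ge>N. \<forall>i j. grid_vertex a b n i j \<in> ball p (e / 2) \<longrightarrow> \<not> grid_maximal f a b n i j r"
    by (rule eventually_not_grid_maximal[OF assms(1,2) \<open>e > 0\<close> ball r(3,4) refl])
      (rule strict_midpoint_convex_on_ball[OF D convex])
  ultimately obtain N1 N2 where
    "\<forall>n\<ge>N1. \<forall>i j. grid_vertex a b n i j \<in> ball p (e / 2) \<longrightarrow> \<not> grid_minimal f a b n i j r"
    "\<forall>n\<ge>N2. \<forall>i j. grid_vertex a b n i j \<in> ball p (e / 2) \<longrightarrow> \<not> grid_maximal f a b n i j r"
    by blast
  then show ?thesis
    using that[of "e / 2" r "max N1 N2"] \<open>e > 0\<close> r(5) by simp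
qed

theorem theorem1:
  fixes a b :: real and f :: "real \<times> real \<Rightarrow> real" and p :: "real \<times> real"
  assumes "a > 0" and "b > 0"
    and "Ck 3 f (interior ({0..a} \<times> {0..b}))"
    and "p \<in> interior ({0..a} \<times> {0..b})"
    and "frechet_derivative f (at p) = (\<lambda>v. 0)"
    and "hessian_det f p < 0"
  shows "\<exists>U r. open U \<and> p \<in> U \<and> r > 0 \<and>
           (\<exists>N. \<forall>n\<ge>N. \<forall>i\<le>n. \<forall>j\<le>n.
              grid_vertex a b n i j \<in> U \<longrightarrow>
                \<not> grid_minimal f a b n i j r \<and> \<not> grid_maximal f a b n i j r)"
proof -
  define S where "S = interior ({0..a} \<times> {0..b})"
  have S: "open S" "S \<subseteq> {0..a} \<times> {0..b}" "p \<in> S"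
    using assms(4) interior_subset by (auto simp: S_def)
  obtain e r N where "e > 0" "r > 0"
    and "\<forall>n\<ge>N. \<forall>i j. grid_vertex a b n i j \<in> ball p e \<longrightarrow>
           \<not> grid_minimal f a b n i j r \<and> \<not> grid_maximal f a b n i j r"
    using saddle_eventually_not_grid_extremal[OF assms(1,2) assms(3)[folded S_def] S assms(6)] .
  then show ?thesis
    by (intro exI[of _ "ball p e"] exI[of _ r] conjI exI[of _ N]) simp_all
qed

end
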